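(* Let $k\ge1$, $\lambda_0>0$, and let $Q(x,dy)$ be a spatially homogeneous Markov kernel on $\mathbf{R}^k$ (i.e. $Q(x,dy)=Q(x-z,dy-z)$ and $Q(z,\mathbf{R}^k)=1$ for all $x,z$) with $Q(0,\{0\})=0$ and symmetric with respect to Lebesgue measure, $Q(x,dy)dx=Q(y,dx)dy$. Consider the compound Poisson process $X_t=x+\sum_{n=1}^{N_t}\xi_n$, where $N$ is a Poisson process with rate $\lambda_0$ and $(\xi_n)$ are i.i.d. with law $Q(0,\cdot)$ independent of $N$; it is symmetric with respect to $m(dx)=\lambda_0^{-1}dx$, and its associated Dirichlet form on $L^2(\mathbf{R}^k,m)$ is $\mathcal{F}=L^2(\mathbf{R}^k,m)$, $\mathcal{E}(u,v)=\frac12\int_{\mathbf{R}^k\times\mathbf{R}^k}(u(x)-u(y))(v(x)-v(y))Q(x,dy)\lambda_0\,m(dx)$, a regular Dirichlet form. Then $(\mathcal{E},\mathcal{F})$ has no proper regular Dirichlet subspace: every regular Dirichlet subspace of $(\mathcal{E},\mathcal{F})$ equals $(\mathcal{E},\mathcal{F})$.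
   Context: A regular Dirichlet subspace of a regular Dirichlet form $(\mathcal{E},\mathcal{F})$ on $L^2(E,m)$ is a regular Dirichlet form $(\mathcal{E}',\mathcal{F}')$ on $L^2(E,m)$ with $\mathcal{F}'\subset\mathcal{F}$ and $\mathcal{E}'(u,v)=\mathcal{E}(u,v)$ for all $u,v\in\mathcal{F}'$; it is proper if it differs from $(\mathcal{E},\mathcal{F})$. *)

theory Defs
  imports "HOL-Analysis.Analysis" "HOL-Probability.Probability"
begin

text \<open>Functions are used as representatives of L^2 classes; the domain of a form is
required to be saturated under a.e. equality and the form to respect a.e. equality.\<close>

definition L2 :: "'a measure \<Rightarrow> ('a \<Rightarrow> real) set" where
  "L2 M = {f. f \<in> borel_measurable M \<and> integrable M (\<lambda>x. (f x)\<^sup>2)}"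

definition E1 :: "'a measure \<Rightarrow> (('a \<Rightarrow> real) \<Rightarrow> ('a \<Rightarrow> real) \<Rightarrow> real)
    \<Rightarrow> ('a \<Rightarrow> real) \<Rightarrow> ('a \<Rightarrow> real) \<Rightarrow> real" where
  "E1 M E u v = E u v + (\<integral>x. u x * v x \<partial>M)"

definition dirichlet_form :: "'a measure \<Rightarrow> ('a \<Rightarrow> real) set
    \<Rightarrow> (('a \<Rightarrow> real) \<Rightarrow> ('a \<Rightarrow> real) \<Rightarrow> real) \<Rightarrow> bool" where
  "dirichlet_form M F E \<longleftrightarrow>
     F \<subseteq> L2 M
   \<and> (\<forall>u\<in>F. \<forall>g\<in>L2 M. (AE x in M. u x = g x) \<longrightarrow> g \<in> F)
   \<and> (\<forall>u\<in>F. \<forall>u'\<in>F. \<forall>v\<in>F. \<forall>v'\<in>F.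
        (AE x in M. u x = u' x) \<longrightarrow> (AE x in M. v x = v' x) \<longrightarrow> E u v = E u' v')
   \<and> (\<lambda>_. 0) \<in> F
   \<and> (\<forall>u\<in>F. \<forall>v\<in>F. (\<lambda>x. u x + v x) \<in> F)
   \<and> (\<forall>u\<in>F. \<forall>c::real. (\<lambda>x. c * u x) \<in> F)
   \<and> (\<forall>u\<in>F. \<forall>v\<in>F. \<forall>w\<in>F. E (\<lambda>x. u x + v x) w = E u w + E v w)
   \<and> (\<forall>u\<in>F. \<forall>w\<in>F. \<forall>c::real. E (\<lambda>x. c * u x) w = c * E u w)
   \<and> (\<forall>u\<in>F. \<forall>v\<in>F. E u v = E v u)
   \<and> (\<forall>u\<in>F. 0 \<le> E u u)
   \<and> (\<forall>f\<in>L2 M. \<forall>e>0. \<exists>u\<in>F. (\<integral>x. (f x - u x)\<^sup>2 \<partial>M) < e)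
   \<and> (\<forall>u. (\<forall>n. u n \<in> F) \<longrightarrow>
        (\<forall>e>0. \<exists>N. \<forall>n\<ge>N. \<forall>m\<ge>N.
            E1 M E (\<lambda>x. u n x - u m x) (\<lambda>x. u n x - u m x) < e) \<longrightarrow>
        (\<exists>w\<in>F. (\<lambda>n. E1 M E (\<lambda>x. u n x - w x) (\<lambda>x. u n x - w x)) \<longlonglongrightarrow> 0))
   \<and> (\<forall>u\<in>F. (\<lambda>x. min 1 (max 0 (u x))) \<in> F
        \<and> E (\<lambda>x. min 1 (max 0 (u x))) (\<lambda>x. min 1 (max 0 (u x))) \<le> E u u)"

definition Cc :: "('a::topological_space \<Rightarrow> real) set" where
  "Cc = {f. continuous_on UNIV f \<and> compact (closure {x. f x \<noteq> 0})}"

definition regular_dirichlet_form :: "'a::topological_space measure \<Rightarrow> ('a \<Rightarrow> real) set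
    \<Rightarrow> (('a \<Rightarrow> real) \<Rightarrow> ('a \<Rightarrow> real) \<Rightarrow> real) \<Rightarrow> bool" where
  "regular_dirichlet_form M F E \<longleftrightarrow>
     dirichlet_form M F E
   \<and> (\<forall>u\<in>F. \<forall>e>0. \<exists>g\<in>F \<inter> Cc. E1 M E (\<lambda>x. u x - g x) (\<lambda>x. u x - g x) < e)
   \<and> (\<forall>f\<in>Cc. \<forall>e>0. \<exists>g\<in>F \<inter> Cc. \<forall>x. \<bar>f x - g x\<bar> < e)"

definition regular_dirichlet_subspace :: "'a::topological_space measure
    \<Rightarrow> ('a \<Rightarrow> real) set \<Rightarrow> (('a \<Rightarrow> real) \<Rightarrow> ('a \<Rightarrow> real) \<Rightarrow> real)
    \<Rightarrow> ('a \<Rightarrow> real) set \<Rightarrow> (('a \<Rightarrow> real) \<Rightarrow> ('a \<Rightarrow> real) \<Rightarrow> real) \<Rightarrow> bool" where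
  "regular_dirichlet_subspace M F' E' F E \<longleftrightarrow>
     regular_dirichlet_form M F' E' \<and> F' \<subseteq> F \<and> (\<forall>u\<in>F'. \<forall>v\<in>F'. E' u v = E u v)"

end

theory Submission
  imports Defs
begin

text \<open>The jump form is bounded on \<open>L\<^sup>2\<close>: symmetry of \<open>Q\<close> makes Lebesgue measure, hence \<open>m\<close>,
  invariant under \<open>Q\<close>, which gives \<open>E(u,u) \<le> 2 \<lambda>\<^sub>0 \<parallel>u\<parallel>\<^sup>2\<close>. On the domain \<open>F'\<close> of a Dirichlet
  subspace the \<open>E\<^sub>1\<close>-norm is therefore equivalent to the \<open>L\<^sup>2\<close>-norm, so closedness of \<open>(E', F')\<close>
  makes \<open>F'\<close> a closed and, being dense, full subspace of \<open>L\<^sup>2\<close>.\<close>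

lemma symmetric_kernel_bind_eq:
  assumes Q: "Q \<in> M \<rightarrow>\<^sub>M subprob_algebra M"
    and Q_prob: "\<And>x. x \<in> space M \<Longrightarrow> emeasure (Q x) (space M) = 1"
    and Q_symm: "\<And>A B. A \<in> sets M \<Longrightarrow> B \<in> sets M \<Longrightarrow>
        (\<integral>\<^sup>+ x. indicator A x * emeasure (Q x) B \<partial>M)
          = (\<integral>\<^sup>+ y. indicator B y * emeasure (Q y) A \<partial>M)"
    and nonempty: "space M \<noteq> {}"
  shows "M \<bind> Q = M"
proof (rule measure_eqI)
  show sets_eq: "sets (M \<bind> Q) = sets M"
    using sets_kernel[OF Q] nonempty by simp
  fix B assume "B \<in> sets (M \<bind> Q)"
  then have B: "B \<in> sets M" using sets_eq by simp
  have "emeasure (M \<bind> Q) B = (\<integral>\<^sup>+ x. indicator (space M) x * emeasure (Q x) B \<partial>M)"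
    using emeasure_bind[OF nonempty Q B]
    by (auto intro!: nn_integral_cong simp: indicator_def)
  also have "\<dots> = (\<integral>\<^sup>+ y. indicator B y * emeasure (Q y) (space M) \<partial>M)"
    using B by (intro Q_symm) auto
  also have "\<dots> = (\<integral>\<^sup>+ y. indicator B y \<partial>M)"
    using Q_prob by (intro nn_integral_cong) (simp add: indicator_def)
  also have "\<dots> = emeasure M B"
    using B by simp
  finally show "emeasure (M \<bind> Q) B = emeasure M B" .
qed

lemma bind_density_const_eq:
  assumes Q: "Q \<in> M \<rightarrow>\<^sub>M subprob_algebra M"
    and invariant: "M \<bind> Q = M"
    and nonempty: "space M \<noteq> {}"
  shows "density M (\<lambda>_. c) \<bind> Q = density M (\<lambda>_. c)"
proof (rule measure_eqI)
  have Q': "Q \<in> density M (\<lambda>_. c) \<rightarrow>\<^sub>M subprob_algebra M"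
    using Q by (simp only: measurable_density_eq1)
  have nonempty': "space (density M (\<lambda>_. c)) \<noteq> {}"
    using nonempty by simp
  show sets_eq: "sets (density M (\<lambda>_. c) \<bind> Q) = sets (density M (\<lambda>_. c))"
    using sets_bind[OF sets_kernel[OF Q'] nonempty'] by simp
  fix B assume "B \<in> sets (density M (\<lambda>_. c) \<bind> Q)"
  then have B: "B \<in> sets M" using sets_eq by simp
  have "emeasure (density M (\<lambda>_. c) \<bind> Q) B = (\<integral>\<^sup>+ x. emeasure (Q x) B \<partial>density M (\<lambda>_. c))"
    by (rule emeasure_bind[OF nonempty' Q' B])
  also have "\<dots> = (\<integral>\<^sup>+ x. c * emeasure (Q x) B \<partial>M)"
    using B Q by (subst nn_integral_density) auto
  also have "\<dots> = c * emeasure (M \<bind> Q) B"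
    using B Q by (simp add: nn_integral_cmult emeasure_bind[OF nonempty Q B])
  finally show "emeasure (density M (\<lambda>_. c) \<bind> Q) B = emeasure (density M (\<lambda>_. c)) B"
    using B by (simp add: invariant emeasure_density_const)
qed

lemma square_diff_le: "((a::real) - b)\<^sup>2 \<le> 2 * a\<^sup>2 + 2 * b\<^sup>2"
  using zero_le_square[of "a + b"] by (simp add: power2_eq_square algebra_simps)

lemma ennreal_integral_le_nn_integral:
  fixes f :: "'a \<Rightarrow> real"
  assumes "AE x in M. 0 \<le> f x"
  shows "ennreal (integral\<^sup>L M f) \<le> (\<integral>\<^sup>+ x. ennreal (f x) \<partial>M)"
proof (cases "integrable M f")
  case True
  then show ?thesis using assms by (simp add: nn_integral_eq_integral)
qed (simp add: not_integrable_integral_eq)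

lemma kernel_energy_le:
  fixes w :: "'a \<Rightarrow> real"
  assumes Q: "Q \<in> M \<rightarrow>\<^sub>M subprob_algebra M"
    and Q_prob: "\<And>x. x \<in> space M \<Longrightarrow> emeasure (Q x) (space M) = 1"
    and invariant: "M \<bind> Q = M"
    and w: "w \<in> borel_measurable M" and w_sq: "integrable M (\<lambda>x. (w x)\<^sup>2)"
  shows "(\<integral>x. (\<integral>y. (w x - w y)\<^sup>2 \<partial>Q x) \<partial>M) \<le> 4 * (\<integral>x. (w x)\<^sup>2 \<partial>M)"
proof -
  define I where "I = (\<integral>x. (w x)\<^sup>2 \<partial>M)"
  define h where "h x = ennreal (2 * (w x)\<^sup>2)" for x
  have h_meas: "h \<in> borel_measurable M"
    unfolding h_def using w by measurable
  have h_int: "(\<integral>\<^sup>+ x. h x \<partial>M) = ennreal (2 * I)"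
    unfolding h_def I_def using w_sq by (subst nn_integral_eq_integral) auto
  have pointwise: "ennreal (\<integral>y. (w x - w y)\<^sup>2 \<partial>Q x) \<le> h x + (\<integral>\<^sup>+ y. h y \<partial>Q x)"
    if x: "x \<in> space M" for x
  proof -
    have sets_Qx: "sets (Q x) = sets M" and space_Qx: "space (Q x) = space M"
      using sets_kernel[OF Q x] by (auto dest: sets_eq_imp_space_eq)
    have "ennreal (\<integral>y. (w x - w y)\<^sup>2 \<partial>Q x) \<le> (\<integral>\<^sup>+ y. ennreal ((w x - w y)\<^sup>2) \<partial>Q x)"
      by (rule ennreal_integral_le_nn_integral) simp
    also have "\<dots> \<le> (\<integral>\<^sup>+ y. h x + h y \<partial>Q x)"
      unfolding h_def
      by (intro nn_integral_mono) (simp add: ennreal_plus[symmetric] square_diff_le del: ennreal_plus)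
    also have "\<dots> = h x * emeasure (Q x) (space (Q x)) + (\<integral>\<^sup>+ y. h y \<partial>Q x)"
      using h_meas by (subst nn_integral_add) (auto simp: measurable_cong_sets[OF sets_Qx refl])
    finally show ?thesis using Q_prob[OF x] by (simp add: space_Qx)
  qed
  have "(\<integral>\<^sup>+ x. ennreal (\<integral>y. (w x - w y)\<^sup>2 \<partial>Q x) \<partial>M)
      \<le> (\<integral>\<^sup>+ x. h x + (\<integral>\<^sup>+ y. h y \<partial>Q x) \<partial>M)"
    by (intro nn_integral_mono pointwise)
  also have "\<dots> = (\<integral>\<^sup>+ x. h x \<partial>M) + (\<integral>\<^sup>+ x. h x \<partial>(M \<bind> Q))"
    using h_meas Q by (simp add: nn_integral_add nn_integral_bind[OF h_meas Q])
  also have "\<dots> = ennreal (4 * I)"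
    using h_int I_def by (simp add: invariant ennreal_plus[symmetric] del: ennreal_plus)
  finally show ?thesis
    unfolding I_def by (intro integral_real_bounded) (auto simp: I_def)
qed

lemma L2_diff:
  assumes "u \<in> L2 M" "v \<in> L2 M"
  shows "(\<lambda>x. u x - v x) \<in> L2 M"
proof -
  have "integrable M (\<lambda>x. (u x - v x)\<^sup>2)"
  proof (rule Bochner_Integration.integrable_bound)
    show "integrable M (\<lambda>x. 2 * (u x)\<^sup>2 + 2 * (v x)\<^sup>2)"
      using assms by (simp add: L2_def)
    show "AE x in M. norm ((u x - v x)\<^sup>2) \<le> norm (2 * (u x)\<^sup>2 + 2 * (v x)\<^sup>2)"
      using square_diff_le by simp
  qed (use assms in \<open>auto simp: L2_def\<close>)
  then show ?thesis using assms by (auto simp: L2_def)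
qed

lemma L2_dist_sq_triangle:
  assumes "u \<in> L2 M" "v \<in> L2 M" "w \<in> L2 M"
  shows "(\<integral>x. (u x - v x)\<^sup>2 \<partial>M) \<le> 2 * (\<integral>x. (u x - w x)\<^sup>2 \<partial>M) + 2 * (\<integral>x. (w x - v x)\<^sup>2 \<partial>M)"
proof -
  have uw: "integrable M (\<lambda>x. (u x - w x)\<^sup>2)" and wv: "integrable M (\<lambda>x. (w x - v x)\<^sup>2)"
    and uv: "integrable M (\<lambda>x. (u x - v x)\<^sup>2)"
    using L2_diff[OF assms(1,3)] L2_diff[OF assms(3,2)] L2_diff[OF assms(1,2)] by (simp_all add: L2_def)
  have "(\<integral>x. (u x - v x)\<^sup>2 \<partial>M) \<le> (\<integral>x. 2 * (u x - w x)\<^sup>2 + 2 * (w x - v x)\<^sup>2 \<partial>M)"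
  proof (rule integral_mono[OF uv])
    show "integrable M (\<lambda>x. 2 * (u x - w x)\<^sup>2 + 2 * (w x - v x)\<^sup>2)"
      using uw wv by simp
    show "(u x - v x)\<^sup>2 \<le> 2 * (u x - w x)\<^sup>2 + 2 * (w x - v x)\<^sup>2" for x
      using square_diff_le[of "u x - w x" "v x - w x"] by (simp add: power2_commute[of "v x"])
  qed
  also have "\<dots> = 2 * (\<integral>x. (u x - w x)\<^sup>2 \<partial>M) + 2 * (\<integral>x. (w x - v x)\<^sup>2 \<partial>M)"
    using uw wv by simp
  finally show ?thesis .
qed

lemma dirichlet_formD:
  assumes "dirichlet_form M F E"
  shows dirichlet_form_subset_L2: "F \<subseteq> L2 M"
    and dirichlet_form_AE_closed: "\<And>u g. u \<in> F \<Longrightarrow> g \<in> L2 M \<Longrightarrow> (AE x in M. u x = g x) \<Longrightarrow> g \<in> F"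
    and dirichlet_form_add_closed: "\<And>u v. u \<in> F \<Longrightarrow> v \<in> F \<Longrightarrow> (\<lambda>x. u x + v x) \<in> F"
    and dirichlet_form_scale_closed: "\<And>u c. u \<in> F \<Longrightarrow> (\<lambda>x. c * u x) \<in> F"
    and dirichlet_form_nonneg: "\<And>u. u \<in> F \<Longrightarrow> 0 \<le> E u u"
    and dirichlet_form_dense: "\<And>f e. f \<in> L2 M \<Longrightarrow> e > 0 \<Longrightarrow> \<exists>u\<in>F. (\<integral>x. (f x - u x)\<^sup>2 \<partial>M) < e"
    and dirichlet_form_complete: "\<And>u. (\<And>n. u n \<in> F) \<Longrightarrow>
        (\<forall>e>0. \<exists>N. \<forall>n\<ge>N. \<forall>k\<ge>N. E1 M E (\<lambda>x. u n x - u k x) (\<lambda>x. u n x - u k x) < e) \<Longrightarrow>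
        \<exists>w\<in>F. (\<lambda>n. E1 M E (\<lambda>x. u n x - w x) (\<lambda>x. u n x - w x)) \<longlonglongrightarrow> 0"
proof -
  note D = assms[unfolded dirichlet_form_def]
  show "F \<subseteq> L2 M"
    using D by meson
  show "\<And>u g. u \<in> F \<Longrightarrow> g \<in> L2 M \<Longrightarrow> (AE x in M. u x = g x) \<Longrightarrow> g \<in> F"
    using D by meson
  show "\<And>u v. u \<in> F \<Longrightarrow> v \<in> F \<Longrightarrow> (\<lambda>x. u x + v x) \<in> F"
    using D by meson
  show "\<And>u c. u \<in> F \<Longrightarrow> (\<lambda>x. c * u x) \<in> F"
    using D by meson
  show "\<And>u. u \<in> F \<Longrightarrow> 0 \<le> E u u"
    using D by meson
  show "\<And>f e. f \<in> L2 M \<Longrightarrow> e > 0 \<Longrightarrow> \<exists>u\<in>F. (\<integral>x. (f x - u x)\<^sup>2 \<partial>M) < e"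
    using D by meson
  show "\<exists>w\<in>F. (\<lambda>n. E1 M E (\<lambda>x. u n x - w x) (\<lambda>x. u n x - w x)) \<longlonglongrightarrow> 0"
    if "\<And>n. u n \<in> F"
      and "\<forall>e>0. \<exists>N. \<forall>n\<ge>N. \<forall>k\<ge>N. E1 M E (\<lambda>x. u n x - u k x) (\<lambda>x. u n x - u k x) < e"
    for u
  proof -
    have "\<forall>u. (\<forall>n. u n \<in> F) \<longrightarrow>
        (\<forall>e>0. \<exists>N. \<forall>n\<ge>N. \<forall>k\<ge>N. E1 M E (\<lambda>x. u n x - u k x) (\<lambda>x. u n x - u k x) < e) \<longrightarrow>
        (\<exists>w\<in>F. (\<lambda>n. E1 M E (\<lambda>x. u n x - w x) (\<lambda>x. u n x - w x)) \<longlonglongrightarrow> 0)"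
      using D by (elim conjE) assumption
    then show ?thesis using that by blast
  qed
qed

lemma dirichlet_form_diff_closed:
  assumes "dirichlet_form M F E" "u \<in> F" "v \<in> F"
  shows "(\<lambda>x. u x - v x) \<in> F"
  using dirichlet_form_add_closed[OF assms(1,2) dirichlet_form_scale_closed[OF assms(1,3), of "-1"]]
  by simp

lemma dirichlet_form_L2_limit_mem:
  assumes df: "dirichlet_form M F E" and C: "0 \<le> C"
    and bounded: "\<And>v. v \<in> F \<Longrightarrow> E v v \<le> C * (\<integral>x. (v x)\<^sup>2 \<partial>M)"
    and f: "f \<in> L2 M" and u: "\<And>n. u n \<in> F"
    and lim: "(\<lambda>n. \<integral>x. (f x - u n x)\<^sup>2 \<partial>M) \<longlonglongrightarrow> 0"
  shows "f \<in> F"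
proof -
  define d where "d n = (\<integral>x. (f x - u n x)\<^sup>2 \<partial>M)" for n
  have u_L2: "u n \<in> L2 M" for n
    using u dirichlet_form_subset_L2[OF df] by blast
  have E1_eq: "E1 M E v v = E v v + (\<integral>x. (v x)\<^sup>2 \<partial>M)" for v
    by (simp add: E1_def power2_eq_square)
  have E1_upper: "E1 M E v v \<le> (C + 1) * (\<integral>x. (v x)\<^sup>2 \<partial>M)" if "v \<in> F" for v
    using bounded[OF that] by (simp add: E1_eq algebra_simps)
  have E1_lower: "(\<integral>x. (v x)\<^sup>2 \<partial>M) \<le> E1 M E v v" if "v \<in> F" for v
    using dirichlet_form_nonneg[OF df that] by (simp add: E1_eq)
  have cauchy: "\<forall>e>0. \<exists>N. \<forall>n\<ge>N. \<forall>k\<ge>N.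
      E1 M E (\<lambda>x. u n x - u k x) (\<lambda>x. u n x - u k x) < e"
  proof (intro allI impI)
    fix e :: real assume "e > 0"
    then have "eventually (\<lambda>n. d n < e / (4 * (C + 1))) sequentially"
      using lim C unfolding d_def by (intro order_tendstoD(2)) auto
    then obtain N where N: "\<And>n. n \<ge> N \<Longrightarrow> d n < e / (4 * (C + 1))"
      by (auto simp: eventually_sequentially)
    show "\<exists>N. \<forall>n\<ge>N. \<forall>k\<ge>N. E1 M E (\<lambda>x. u n x - u k x) (\<lambda>x. u n x - u k x) < e"
    proof (intro exI allI impI)
      fix n k assume "N \<le> n" "N \<le> k"
      have "E1 M E (\<lambda>x. u n x - u k x) (\<lambda>x. u n x - u k x)
          \<le> (C + 1) * (\<integral>x. (u n x - u k x)\<^sup>2 \<partial>M)"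
        by (intro E1_upper dirichlet_form_diff_closed[OF df u u])
      also have "\<dots> \<le> (C + 1) * (2 * d n + 2 * d k)"
        using L2_dist_sq_triangle[OF u_L2 u_L2 f, of n k] C
        by (intro mult_left_mono) (simp_all add: d_def power2_commute[of "u n x" "f x" for x])
      also have "\<dots> < e"
        using N[OF \<open>N \<le> n\<close>] N[OF \<open>N \<le> k\<close>] C \<open>e > 0\<close> by (simp add: field_simps)
      finally show "E1 M E (\<lambda>x. u n x - u k x) (\<lambda>x. u n x - u k x) < e" .
    qed
  qed
  obtain w where w: "w \<in> F"
    and E1_lim: "(\<lambda>n. E1 M E (\<lambda>x. u n x - w x) (\<lambda>x. u n x - w x)) \<longlonglongrightarrow> 0"
    using dirichlet_form_complete[OF df u cauchy] by blast
  have w_L2: "w \<in> L2 M"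
    using w dirichlet_form_subset_L2[OF df] by blast
  have bound: "(\<integral>x. (f x - w x)\<^sup>2 \<partial>M)
      \<le> 2 * d n + 2 * E1 M E (\<lambda>x. u n x - w x) (\<lambda>x. u n x - w x)" for n
    using L2_dist_sq_triangle[OF f w_L2 u_L2, of n] E1_lower[OF dirichlet_form_diff_closed[OF df u[of n] w]]
    unfolding d_def by linarith
  have "(\<lambda>n. 2 * d n + 2 * E1 M E (\<lambda>x. u n x - w x) (\<lambda>x. u n x - w x)) \<longlonglongrightarrow> 0"
    using lim E1_lim unfolding d_def by (intro tendsto_add_zero tendsto_mult_right_zero)
  then have "(\<integral>x. (f x - w x)\<^sup>2 \<partial>M) \<le> 0"
    by (rule LIMSEQ_le_const) (use bound in blast)
  moreover have "integrable M (\<lambda>x. (f x - w x)\<^sup>2)"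
    using L2_diff[OF f w_L2] by (simp add: L2_def)
  ultimately have "AE x in M. (f x - w x)\<^sup>2 = 0"
    by (subst integral_nonneg_eq_0_iff_AE[symmetric]) (auto intro: antisym integral_nonneg_AE)
  then have "AE x in M. w x = f x"
    by eventually_elim simp
  then show "f \<in> F"
    by (rule dirichlet_form_AE_closed[OF df w f])
qed

lemma dirichlet_form_eq_L2_if_bounded:
  assumes df: "dirichlet_form M F E" and C: "0 \<le> C"
    and bounded: "\<And>v. v \<in> F \<Longrightarrow> E v v \<le> C * (\<integral>x. (v x)\<^sup>2 \<partial>M)"
  shows "F = L2 M"
proof
  show "F \<subseteq> L2 M"
    by (rule dirichlet_form_subset_L2[OF df])
  show "L2 M \<subseteq> F"
  proof
    fix f assume f: "f \<in> L2 M"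
    have "\<forall>n. \<exists>v\<in>F. (\<integral>x. (f x - v x)\<^sup>2 \<partial>M) < inverse (real (Suc n))"
      using dirichlet_form_dense[OF df f] by simp
    then obtain u where u: "\<And>n. u n \<in> F"
      and close: "\<And>n. (\<integral>x. (f x - u n x)\<^sup>2 \<partial>M) < inverse (real (Suc n))"
      by metis
    have "(\<lambda>n. \<integral>x. (f x - u n x)\<^sup>2 \<partial>M) \<longlonglongrightarrow> 0"
      using close
      by (intro tendsto_sandwich[OF _ _ tendsto_const LIMSEQ_inverse_real_of_nat])
         (auto intro!: always_eventually integral_nonneg_AE less_imp_le)
    then show "f \<in> F"
      by (intro dirichlet_form_L2_limit_mem[OF df C _ f u]) (use bounded in auto)
  qed
qed

theorem corollary4p2:
  fixes lam0 :: real
    and Q :: "'a::euclidean_space \<Rightarrow> 'a measure"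
    and m :: "'a measure"
    and F :: "('a \<Rightarrow> real) set"
    and E :: "('a \<Rightarrow> real) \<Rightarrow> ('a \<Rightarrow> real) \<Rightarrow> real"
  assumes lam_pos: "lam0 > 0"
    and Q_kernel: "Q \<in> borel \<rightarrow>\<^sub>M prob_algebra borel"
    and Q_homog: "\<And>x z A. A \<in> sets borel \<Longrightarrow>
        emeasure (Q x) A = emeasure (Q (x - z)) ((\<lambda>y. y - z) ` A)"
    and Q_prob: "\<And>z. emeasure (Q z) UNIV = 1"
    and Q_no_zero_jump: "emeasure (Q 0) {0} = 0"
    and Q_symm: "\<And>A B. A \<in> sets borel \<Longrightarrow> B \<in> sets borel \<Longrightarrow>
        (\<integral>\<^sup>+ x. indicator A x * emeasure (Q x) B \<partial>lborel)
          = (\<integral>\<^sup>+ y. indicator B y * emeasure (Q y) A \<partial>lborel)"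
    and m_def: "m = density lborel (\<lambda>_. ennreal (1 / lam0))"
    and F_def: "F = L2 m"
    and E_def: "E = (\<lambda>u v. (1/2) * (\<integral>x. (\<integral>y. (u x - u y) * (v x - v y) \<partial>(Q x)) * lam0 \<partial>m))"
  shows "\<forall>F' E'. regular_dirichlet_subspace m F' E' F E \<longrightarrow>
           F' = F \<and> (\<forall>u\<in>F. \<forall>v\<in>F. E' u v = E u v)"
proof (intro allI impI)
  fix F' E' assume "regular_dirichlet_subspace m F' E' F E"
  then have df: "dirichlet_form m F' E'" and F'_F: "F' \<subseteq> F"
    and E'_E: "\<forall>u\<in>F'. \<forall>v\<in>F'. E' u v = E u v"
    by (auto simp: regular_dirichlet_subspace_def regular_dirichlet_form_def)
  have sets_m: "sets m = sets lborel"
    unfolding m_def by simp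
  have Q_lborel: "Q \<in> lborel \<rightarrow>\<^sub>M subprob_algebra lborel"
    using measurable_prob_algebraD[OF Q_kernel]
    by (simp only: subprob_algebra_cong[OF sets_lborel] measurable_cong_sets[OF sets_lborel refl])
  have Q_m: "Q \<in> m \<rightarrow>\<^sub>M subprob_algebra m"
    using Q_lborel unfolding subprob_algebra_cong[OF sets_m]
    by (simp only: m_def measurable_density_eq1)
  have "lborel \<bind> Q = lborel"
    using Q_prob Q_symm by (intro symmetric_kernel_bind_eq[OF Q_lborel]) auto
  then have m_invariant: "m \<bind> Q = m"
    unfolding m_def by (rule bind_density_const_eq[OF Q_lborel]) simp
  have E_bounded: "E u u \<le> 2 * lam0 * (\<integral>x. (u x)\<^sup>2 \<partial>m)" if "u \<in> L2 m" for u
  proof -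
    have "(\<integral>x. (\<integral>y. (u x - u y)\<^sup>2 \<partial>Q x) \<partial>m) \<le> 4 * (\<integral>x. (u x)\<^sup>2 \<partial>m)"
      using that Q_prob m_invariant sets_eq_imp_space_eq[OF sets_m]
      by (intro kernel_energy_le[OF Q_m]) (auto simp: L2_def)
    then show ?thesis
      using lam_pos by (simp add: E_def power2_eq_square)
  qed
  have "F' = L2 m"
    using E'_E F'_F E_bounded lam_pos unfolding F_def
    by (intro dirichlet_form_eq_L2_if_bounded[OF df, of "2 * lam0"]) auto
  then show "F' = F \<and> (\<forall>u\<in>F. \<forall>v\<in>F. E' u v = E u v)"
    using E'_E F_def by simp
qed

end
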